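(* Let $S_\omega$ be a standard graded skew polynomial algebra in $n$ variables at cube roots of unity. Then a subset $F\subset[n]$ is a face of $\Delta_\omega$ if and only if $F$ is an independent set of $I_v(M_\omega)$ for some $v\in[n]$. In particular, $\dim\Delta_\omega=\max\{\alpha(I_v(M_\omega))\mid v\in[n]\}-1$.
   Context: Let $k$ be an algebraically closed field of characteristic $0$; fix a primitive cube root of unity $\zeta_3$. For $\omega=(\omega_{ij})$ with $\omega_{ii}=1$, $\omega_{ij}\omega_{ji}=1$, all cube roots of unity, $S_\omega=k\langle x_1,\dots,x_n\rangle/(x_ix_j-\omega_{ij}x_jx_i)$ with $\deg x_i=1$; its E-matrix is $M_\omega=(m_{ij})$ over $\mathbb{Z}/3\mathbb{Z}$ with $\omega_{ij}=\zeta_3^{m_{ij}}$ (viewed as a digraph on $[n]$ with an edge $i\to j$ iff $m_{ij}=1$). The point simplicial complex $\Delta_\omega$ has vertex set $[n]$ and faces the $F\subset[n]$ with $\omega_{ij}\omega_{jh}\omega_{hi}=1$ for all distinct $i,j,h\in F$; $\dim\Delta=\max\{|F|-1\mid F\in\Delta\}$. For $v\in[n]$ let $X_v$ be the matrix with $(X_v)_{iv}=1$, $(X_v)_{vi}=-1$ for $i\ne v$ and other entries $0$. The isolation $I_v(M)$ of a skew-symmetric $M$ over $\mathbb{Z}/3\mathbb{Z}$ at $v$ is the unique matrix of the form $M+\sum_{u=1}^n a_uX_u$ ($a_u\in\mathbb{Z}/3\mathbb{Z}$) whose $v$-th row and column are zero. A set $T\subset[n]$ is independent in a skew-symmetric $N=(n_{ij})$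 if $n_{ij}=0$ for all distinct $i,j\in T$, and the independence number $\alpha(N)$ is the maximum size of an independent set. *)

theory Defs
  imports Main "HOL-Library.Numeral_Type" "HOL-Computational_Algebra.Polynomial"
begin

text \<open>Vertex set [n] = {1..n}. Matrices are functions nat => nat => 3 (the type 3 is Z/3Z),
  supported on [n] x [n] (entries outside are 0).\<close>

definition alg_closed_type :: "'k::field itself \<Rightarrow> bool" where
  "alg_closed_type T \<longleftrightarrow> (\<forall>p :: 'k poly. degree p > 0 \<longrightarrow> (\<exists>x. poly p x = 0))"

definition cube_param :: "nat \<Rightarrow> (nat \<Rightarrow> nat \<Rightarrow> 'k::field) \<Rightarrow> bool" where
  "cube_param n \<omega> \<longleftrightarrow>
     (\<forall>i\<in>{1..n}. \<omega> i i = 1) \<and>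
     (\<forall>i\<in>{1..n}. \<forall>j\<in>{1..n}. \<omega> i j * \<omega> j i = 1 \<and> \<omega> i j ^ 3 = 1)"

definition Emat :: "nat \<Rightarrow> 'k::field \<Rightarrow> (nat \<Rightarrow> nat \<Rightarrow> 'k) \<Rightarrow> nat \<Rightarrow> nat \<Rightarrow> 3" where
  "Emat n \<zeta> \<omega> i j =
     (if i \<in> {1..n} \<and> j \<in> {1..n} then of_nat (LEAST k::nat. \<omega> i j = \<zeta> ^ k) else 0)"

definition point_complex :: "nat \<Rightarrow> (nat \<Rightarrow> nat \<Rightarrow> 'k::field) \<Rightarrow> nat set set" where
  "point_complex n \<omega> = {F. F \<subseteq> {1..n} \<and>
     (\<forall>i\<in>F. \<forall>j\<in>F. \<forall>h\<in>F. i \<noteq> j \<and> j \<noteq> h \<and> i \<noteq> h \<longrightarrow> \<omega> i j * \<omega> j h * \<omega> h i = 1)}"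

definition cdim :: "nat set set \<Rightarrow> int" where
  "cdim \<Delta> = Max {int (card F) - 1 | F. F \<in> \<Delta>}"

definition Xmat :: "nat \<Rightarrow> nat \<Rightarrow> nat \<Rightarrow> nat \<Rightarrow> 3" where
  "Xmat n v i j =
     (if i \<in> {1..n} \<and> j \<in> {1..n} then
        (if j = v \<and> i \<noteq> v then 1 else if i = v \<and> j \<noteq> v then -1 else 0)
      else 0)"

definition isolation :: "nat \<Rightarrow> nat \<Rightarrow> (nat \<Rightarrow> nat \<Rightarrow> 3) \<Rightarrow> nat \<Rightarrow> nat \<Rightarrow> 3" where
  "isolation n v M = (THE N. (\<exists>a :: nat \<Rightarrow> 3. N = (\<lambda>i j. M i j + (\<Sum>u\<in>{1..n}. a u * Xmat n u i j)))
       \<and> (\<forall>i\<in>{1..n}. N v i = 0 \<and> N i v = 0))"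

definition independent :: "nat \<Rightarrow> (nat \<Rightarrow> nat \<Rightarrow> 3) \<Rightarrow> nat set \<Rightarrow> bool" where
  "independent n N T \<longleftrightarrow> T \<subseteq> {1..n} \<and> (\<forall>i\<in>T. \<forall>j\<in>T. i \<noteq> j \<longrightarrow> N i j = 0)"

definition indep_number :: "nat \<Rightarrow> (nat \<Rightarrow> nat \<Rightarrow> 3) \<Rightarrow> nat" where
  "indep_number n N = Max (card ` {T. independent n N T})"

end

theory Submission
  imports Defs
begin

text \<open>Since \<open>\<zeta>\<close> is a primitive cube root of unity, \<open>\<omega>\<^sub>i\<^sub>j \<omega>\<^sub>j\<^sub>h \<omega>\<^sub>h\<^sub>i = 1\<close> says exactly
  that \<open>m\<^sub>i\<^sub>j + m\<^sub>j\<^sub>h + m\<^sub>h\<^sub>i = 0\<close> in \<open>\<int>/3\<int>\<close>, so the faces of \<open>\<Delta>\<^sub>\<omega>\<close> are the sets on which every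
  3-cycle of \<open>M\<^sub>\<omega>\<close> sums to zero. The isolation has the explicit entries
  \<open>I\<^sub>v(M)\<^sub>i\<^sub>j = m\<^sub>i\<^sub>j + m\<^sub>j\<^sub>v + m\<^sub>v\<^sub>i\<close>, the sum around the 3-cycle through \<open>v\<close>. A face is therefore
  independent in \<open>I\<^sub>v(M)\<close> for any of its vertices \<open>v\<close>; conversely the 3-cycle sum over
  \<open>i, j, h\<close> is the sum of the three cycle sums through \<open>v\<close>, so independent sets are faces.\<close>

lemma power_primitive_cube_root_eq_1_iff:
  fixes \<zeta> :: "'k::field"
  assumes "\<zeta> ^ 3 = 1" "\<zeta> \<noteq> 1"
  shows "\<zeta> ^ k = 1 \<longleftrightarrow> (of_nat k :: 3) = 0"
proof -
  have "\<zeta> ^ k = \<zeta> ^ (3 * (k div 3) + k mod 3)" by simp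
  also have "\<dots> = (\<zeta> ^ 3) ^ (k div 3) * \<zeta> ^ (k mod 3)"
    by (simp only: power_add power_mult)
  finally have reduce: "\<zeta> ^ k = \<zeta> ^ (k mod 3)"
    using assms(1) by simp
  have "\<zeta> ^ 2 \<noteq> 1"
  proof
    assume "\<zeta> ^ 2 = 1"
    then have "\<zeta> ^ 3 = \<zeta>" by (simp add: power3_eq_cube power2_eq_square)
    with assms show False by simp
  qed
  moreover have "k mod 3 = 0 \<or> k mod 3 = 1 \<or> k mod 3 = 2" by auto
  ultimately have "\<zeta> ^ k = 1 \<longleftrightarrow> 3 dvd k"
    using reduce assms(2) by (auto simp: dvd_eq_mod_eq_0)
  then show ?thesis by (simp add: of_nat_eq_0_iff_char_dvd)
qed

lemma cube_root_of_unity_eq_power: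
  fixes \<zeta> x :: "'k::field"
  assumes "\<zeta> ^ 3 = 1" "\<zeta> \<noteq> 1" "x ^ 3 = 1"
  shows "\<exists>k. x = \<zeta> ^ k"
proof -
  have "(\<zeta> - 1) * (\<zeta> ^ 2 + \<zeta> + 1) = \<zeta> ^ 3 - 1"
    by (simp add: algebra_simps power2_eq_square power3_eq_cube)
  then have \<zeta>_root: "\<zeta> ^ 2 + \<zeta> + 1 = 0"
    using assms(1,2) by simp
  have "(x - 1) * (x - \<zeta>) * (x - \<zeta> ^ 2)
      = x ^ 3 - (\<zeta> ^ 2 + \<zeta> + 1) * x ^ 2 + \<zeta> * (\<zeta> ^ 2 + \<zeta> + 1) * x - \<zeta> ^ 3"
    by (simp add: algebra_simps power2_eq_square power3_eq_cube)
  then have "(x - 1) * (x - \<zeta>) * (x - \<zeta> ^ 2) = 0"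
    using \<zeta>_root assms(1,3) by simp
  then have "x = \<zeta> ^ 0 \<or> x = \<zeta> ^ 1 \<or> x = \<zeta> ^ 2" by simp
  then show ?thesis by blast
qed

lemma double_eq_0_iff_mod3: "x + x = (0::3) \<longleftrightarrow> x = 0"
proof
  assume "x + x = 0"
  then have "x = x + x + x" by simp
  also have "\<dots> = 3 * x" by (simp add: algebra_simps)
  also have "(3::3) = 0" by simp
  finally show "x = 0" by simp
qed simp

definition skew_matrix :: "nat \<Rightarrow> (nat \<Rightarrow> nat \<Rightarrow> 3) \<Rightarrow> bool" where
  "skew_matrix n M \<longleftrightarrow>
     (\<forall>i j. \<not> (i \<in> {1..n} \<and> j \<in> {1..n}) \<longrightarrow> M i j = 0) \<and>
     (\<forall>i\<in>{1..n}. \<forall>j\<in>{1..n}. M j i = - M i j)"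

definition zero_cycle_set :: "nat \<Rightarrow> (nat \<Rightarrow> nat \<Rightarrow> 3) \<Rightarrow> nat set \<Rightarrow> bool" where
  "zero_cycle_set n M F \<longleftrightarrow> F \<subseteq> {1..n} \<and>
     (\<forall>i\<in>F. \<forall>j\<in>F. \<forall>h\<in>F. i \<noteq> j \<and> j \<noteq> h \<and> i \<noteq> h \<longrightarrow> M i j + M j h + M h i = 0)"

lemma skew_matrix_outside:
  "skew_matrix n M \<Longrightarrow> \<not> (i \<in> {1..n} \<and> j \<in> {1..n}) \<Longrightarrow> M i j = 0"
  unfolding skew_matrix_def by blast

lemma skew_matrix_antisym:
  "skew_matrix n M \<Longrightarrow> i \<in> {1..n} \<Longrightarrow> j \<in> {1..n} \<Longrightarrow> M j i = - M i j"
  unfolding skew_matrix_def by blast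

lemma skew_matrix_diag:
  assumes "skew_matrix n M" "i \<in> {1..n}"
  shows "M i i = 0"
proof -
  have "M i i = - M i i" using skew_matrix_antisym[OF assms assms(2)] .
  then have "M i i + M i i = 0" by (simp only: eq_neg_iff_add_eq_0)
  then show ?thesis by (simp only: double_eq_0_iff_mod3)
qed

lemma sum_Xmat:
  "(\<Sum>u\<in>{1..n}. a u * Xmat n u i j) = (if i \<in> {1..n} \<and> j \<in> {1..n} \<and> i \<noteq> j then a j - a i else 0)"
proof (cases "i \<in> {1..n} \<and> j \<in> {1..n} \<and> i \<noteq> j")
  case True
  then have "Xmat n u i j = (if u = j then 1 else 0) - (if u = i then 1 else 0)" for u
    unfolding Xmat_def by auto
  then have "(\<Sum>u\<in>{1..n}. a u * Xmat n u i j)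
      = (\<Sum>u\<in>{1..n}. (if u = j then a u else 0) - (if u = i then a u else 0))"
    by (intro sum.cong) simp_all
  then show ?thesis using True by (simp add: sum_subtractf)
next
  case False
  then have "Xmat n u i j = 0" for u unfolding Xmat_def by auto
  then show ?thesis by (simp only: if_not_P[OF False] mult_zero_right sum.neutral_const)
qed

lemma isolation_eq:
  assumes skew: "skew_matrix n M" and v: "v \<in> {1..n}"
  shows "isolation n v M = (\<lambda>i j. if i \<in> {1..n} \<and> j \<in> {1..n} then M i j - M v j + M v i else 0)"
    (is "_ = ?I")
  unfolding isolation_def
proof (rule the_equality)
  \<comment> \<open>existence with \<open>a\<^sub>u = -m\<^sub>v\<^sub>u\<close>; uniqueness because a vanishing row \<open>v\<close> forces \<open>a\<^sub>k = a\<^sub>v - m\<^sub>v\<^sub>k\<close>\<close>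
  note out = skew_matrix_outside[OF skew]
  have diag: "M i i = 0" if "i \<in> {1..n}" for i
    using skew_matrix_diag[OF skew that] .
  have "?I i j = M i j + (\<Sum>u\<in>{1..n}. - M v u * Xmat n u i j)" for i j
    unfolding sum_Xmat[of "\<lambda>u. - M v u"] using out diag by auto
  then have "?I = (\<lambda>i j. M i j + (\<Sum>u\<in>{1..n}. - M v u * Xmat n u i j))" by blast
  moreover have "?I v i = 0 \<and> ?I i v = 0" if "i \<in> {1..n}" for i
    using that v diag[OF v] skew_matrix_antisym[OF skew that v] by auto
  ultimately show "(\<exists>a. ?I = (\<lambda>i j. M i j + (\<Sum>u\<in>{1..n}. a u * Xmat n u i j)))
      \<and> (\<forall>i\<in>{1..n}. ?I v i = 0 \<and> ?I i v = 0)"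
    by (intro conjI ballI exI[of _ "\<lambda>u. - M v u"]) blast+
next
  fix N
  assume "(\<exists>a. N = (\<lambda>i j. M i j + (\<Sum>u\<in>{1..n}. a u * Xmat n u i j)))
      \<and> (\<forall>i\<in>{1..n}. N v i = 0 \<and> N i v = 0)"
  then obtain a where N: "N = (\<lambda>i j. M i j + (\<Sum>u\<in>{1..n}. a u * Xmat n u i j))"
    and row_v: "\<forall>k\<in>{1..n}. N v k = 0" by blast
  have N_in: "N i j = M i j + (if i = j then 0 else a j - a i)"
    if "i \<in> {1..n}" "j \<in> {1..n}" for i j
    unfolding N sum_Xmat using that by simp
  have a_eq: "a k = a v - M v k" if "k \<in> {1..n}" for k
  proof (cases "k = v")
    case False
    then have "M v k + (a k - a v) = 0"
      using row_v that v N_in[OF v that] by simp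
    then show ?thesis by (simp add: algebra_simps eq_diff_eq)
  qed (simp add: skew_matrix_diag[OF skew v])
  show "N = ?I"
  proof (intro ext)
    fix i j
    show "N i j = ?I i j"
    proof (cases "i \<in> {1..n} \<and> j \<in> {1..n}")
      case True
      then have "a i = a v - M v i" "a j = a v - M v j"
        using a_eq by blast+
      then show ?thesis
        using True N_in skew_matrix_diag[OF skew] by (cases "i = j") simp_all
    next
      case False
      then have off: "\<not> (i \<in> {1..n} \<and> j \<in> {1..n} \<and> i \<noteq> j)" by blast
      show ?thesis
        unfolding N sum_Xmat if_not_P[OF False] if_not_P[OF off]
        using skew_matrix_outside[OF skew False] by simp
    qed
  qed
qed

lemma independent_isolation_iff:
  assumes "skew_matrix n M" "v \<in> {1..n}"
  shows "independent n (isolation n v M) F \<longleftrightarrow>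
    F \<subseteq> {1..n} \<and> (\<forall>i\<in>F. \<forall>j\<in>F. i \<noteq> j \<longrightarrow> M i j - M v j + M v i = 0)"
proof -
  have "isolation n v M i j = M i j - M v j + M v i" if "i \<in> {1..n}" "j \<in> {1..n}" for i j
    using that by (simp add: isolation_eq[OF assms])
  then show ?thesis
    unfolding independent_def by (smt (verit) subsetD)
qed

lemma zero_cycle_set_iff_independent_isolation:
  assumes skew: "skew_matrix n M" and "n \<ge> 1"
  shows "zero_cycle_set n M F \<longleftrightarrow> (\<exists>v\<in>{1..n}. independent n (isolation n v M) F)"
proof
  assume F: "zero_cycle_set n M F"
  then have F_sub: "F \<subseteq> {1..n}"
    and cycles: "\<And>i j h. \<lbrakk>i \<in> F; j \<in> F; h \<in> F; i \<noteq> j; j \<noteq> h; i \<noteq> h\<rbrakk>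
      \<Longrightarrow> M i j + M j h + M h i = 0"
    unfolding zero_cycle_set_def by blast+
  show "\<exists>v\<in>{1..n}. independent n (isolation n v M) F"
  proof (cases "F = {}")
    case True
    then show ?thesis using \<open>n \<ge> 1\<close> by (intro bexI[of _ 1]) (simp_all add: independent_def)
  next
    case False
    then obtain v where "v \<in> F" by blast
    then have v: "v \<in> {1..n}" using F_sub by blast
    have "M i j - M v j + M v i = 0" if "i \<in> F" "j \<in> F" "i \<noteq> j" for i j
    proof -
      have i: "i \<in> {1..n}" and j: "j \<in> {1..n}" using F_sub that by blast+
      consider "v = i" | "v = j" | "v \<noteq> i" "v \<noteq> j" by blast
      then show ?thesis
      proof cases
        case 1
        then show ?thesis using skew_matrix_diag[OF skew i] by simp
      next
        case 2
        then show ?thesis using skew_matrix_diag[OF skew j] skew_matrix_antisym[OF skew i j] by simp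
      next
        case 3
        then have "M i j + M j v + M v i = 0"
          using cycles[OF that(1,2) \<open>v \<in> F\<close>] that(3) by blast
        then show ?thesis using skew_matrix_antisym[OF skew j v] by simp
      qed
    qed
    then have "independent n (isolation n v M) F"
      using F_sub independent_isolation_iff[OF skew v] by simp
    then show ?thesis using v by blast
  qed
next
  assume "\<exists>v\<in>{1..n}. independent n (isolation n v M) F"
  then obtain v where v: "v \<in> {1..n}" and "independent n (isolation n v M) F" by blast
  then have F: "F \<subseteq> {1..n}"
    and through_v: "\<forall>i\<in>F. \<forall>j\<in>F. i \<noteq> j \<longrightarrow> M i j - M v j + M v i = 0"
    using independent_isolation_iff[OF skew v] by simp_all
  have cycles: "M i j + M j h + M h i = 0"
    if "i \<in> F" "j \<in> F" "h \<in> F" "i \<noteq> j \<and> j \<noteq> h \<and> i \<noteq> h" for i j h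
  proof -
    have "(M i j - M v j + M v i) + (M j h - M v h + M v j) + (M h i - M v i + M v h) = 0"
      using through_v that by simp
    then show ?thesis by (simp add: algebra_simps)
  qed
  show "zero_cycle_set n M F" unfolding zero_cycle_set_def using F cycles by blast
qed

lemma Emat_exponent:
  assumes "\<zeta> ^ 3 = 1" "\<zeta> \<noteq> 1" "cube_param n \<omega>" "i \<in> {1..n}" "j \<in> {1..n}"
  obtains e where "\<omega> i j = \<zeta> ^ e" "Emat n \<zeta> \<omega> i j = of_nat e"
proof
  have "\<omega> i j ^ 3 = 1" using assms(3-5) unfolding cube_param_def by blast
  then have "\<exists>k. \<omega> i j = \<zeta> ^ k" using cube_root_of_unity_eq_power assms(1,2) by blast
  then show "\<omega> i j = \<zeta> ^ (LEAST k. \<omega> i j = \<zeta> ^ k)" by (rule LeastI_ex)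
  show "Emat n \<zeta> \<omega> i j = of_nat (LEAST k. \<omega> i j = \<zeta> ^ k)"
    using assms(4,5) unfolding Emat_def by simp
qed

lemma skew_matrix_Emat:
  assumes \<zeta>: "\<zeta> ^ 3 = 1" "\<zeta> \<noteq> 1" and \<omega>: "cube_param n \<omega>"
  shows "skew_matrix n (Emat n \<zeta> \<omega>)"
  unfolding skew_matrix_def
proof (intro conjI allI ballI impI)
  show "Emat n \<zeta> \<omega> i j = 0" if "\<not> (i \<in> {1..n} \<and> j \<in> {1..n})" for i j
    unfolding Emat_def by (simp only: if_not_P[OF that])
next
  fix i j assume ij: "i \<in> {1..n}" "j \<in> {1..n}"
  obtain e where e: "\<omega> i j = \<zeta> ^ e" "Emat n \<zeta> \<omega> i j = of_nat e"
    using Emat_exponent[OF \<zeta> \<omega> ij] .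
  obtain e' where e': "\<omega> j i = \<zeta> ^ e'" "Emat n \<zeta> \<omega> j i = of_nat e'"
    using Emat_exponent[OF \<zeta> \<omega> ij(2,1)] .
  have "\<omega> i j * \<omega> j i = 1" using \<omega> ij unfolding cube_param_def by blast
  then have "\<zeta> ^ (e + e') = 1" using e(1) e'(1) by (simp add: power_add)
  then have "Emat n \<zeta> \<omega> i j + Emat n \<zeta> \<omega> j i = 0"
    using power_primitive_cube_root_eq_1_iff[OF \<zeta>] e(2) e'(2) by simp
  then show "Emat n \<zeta> \<omega> j i = - Emat n \<zeta> \<omega> i j"
    by (simp add: eq_neg_iff_add_eq_0 add.commute)
qed

lemma triangle_product_eq_1_iff_Emat:
  assumes \<zeta>: "\<zeta> ^ 3 = 1" "\<zeta> \<noteq> 1" and \<omega>: "cube_param n \<omega>"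
    and ijh: "i \<in> {1..n}" "j \<in> {1..n}" "h \<in> {1..n}"
  shows "\<omega> i j * \<omega> j h * \<omega> h i = 1 \<longleftrightarrow>
    Emat n \<zeta> \<omega> i j + Emat n \<zeta> \<omega> j h + Emat n \<zeta> \<omega> h i = 0"
proof -
  obtain e1 where e1: "\<omega> i j = \<zeta> ^ e1" "Emat n \<zeta> \<omega> i j = of_nat e1"
    using Emat_exponent[OF \<zeta> \<omega> ijh(1,2)] .
  obtain e2 where e2: "\<omega> j h = \<zeta> ^ e2" "Emat n \<zeta> \<omega> j h = of_nat e2"
    using Emat_exponent[OF \<zeta> \<omega> ijh(2,3)] .
  obtain e3 where e3: "\<omega> h i = \<zeta> ^ e3" "Emat n \<zeta> \<omega> h i = of_nat e3"
    using Emat_exponent[OF \<zeta> \<omega> ijh(3,1)] .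
  have "\<omega> i j * \<omega> j h * \<omega> h i = \<zeta> ^ (e1 + e2 + e3)"
    using e1 e2 e3 by (simp add: power_add)
  then show ?thesis
    using power_primitive_cube_root_eq_1_iff[OF \<zeta>, of "e1 + e2 + e3"] e1 e2 e3 by simp
qed

lemma point_complex_eq_zero_cycle_sets:
  assumes "\<zeta> ^ 3 = 1" "\<zeta> \<noteq> 1" "cube_param n \<omega>"
  shows "point_complex n \<omega> = {F. zero_cycle_set n (Emat n \<zeta> \<omega>) F}"
proof -
  have "F \<in> point_complex n \<omega> \<longleftrightarrow> zero_cycle_set n (Emat n \<zeta> \<omega>) F" for F
  proof (cases "F \<subseteq> {1..n}")
    case True
    then have "\<omega> i j * \<omega> j h * \<omega> h i = 1 \<longleftrightarrow>
        Emat n \<zeta> \<omega> i j + Emat n \<zeta> \<omega> j h + Emat n \<zeta> \<omega> h i = 0"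
      if "i \<in> F" "j \<in> F" "h \<in> F" for i j h
      using triangle_product_eq_1_iff_Emat[OF assms] that by blast
    then show ?thesis
      unfolding point_complex_def zero_cycle_set_def using True by simp
  qed (simp add: point_complex_def zero_cycle_set_def)
  then show ?thesis by blast
qed

lemma cdim_eq_Max_card:
  assumes "finite \<Delta>" "\<Delta> \<noteq> {}"
  shows "cdim \<Delta> = int (Max (card ` \<Delta>)) - 1"
proof -
  have "{int (card F) - 1 |F. F \<in> \<Delta>} = (\<lambda>k. int k - 1) ` card ` \<Delta>" by blast
  moreover have "int (Max (card ` \<Delta>)) - 1 = Max ((\<lambda>k. int k - 1) ` card ` \<Delta>)"
    using assms by (intro mono_Max_commute) (auto simp: mono_def)
  ultimately show ?thesis unfolding cdim_def by simp
qed

lemma Max_UN: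
  fixes A :: "'i \<Rightarrow> 'a::linorder set"
  assumes "finite I" "I \<noteq> {}" "\<And>i. i \<in> I \<Longrightarrow> finite (A i)" "\<And>i. i \<in> I \<Longrightarrow> A i \<noteq> {}"
  shows "Max (\<Union>i\<in>I. A i) = Max ((\<lambda>i. Max (A i)) ` I)"
proof (rule Max_eqI)
  show "finite (\<Union>i\<in>I. A i)" using assms by simp
next
  fix y assume "y \<in> (\<Union>i\<in>I. A i)"
  then show "y \<le> Max ((\<lambda>i. Max (A i)) ` I)"
    using assms by (meson Max.coboundedI UN_E finite_imageI image_eqI order_trans)
next
  have "Max ((\<lambda>i. Max (A i)) ` I) \<in> (\<lambda>i. Max (A i)) ` I"
    using assms(1,2) by (intro Max_in) auto
  then show "Max ((\<lambda>i. Max (A i)) ` I) \<in> (\<Union>i\<in>I. A i)"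
    using assms(3,4) Max_in by fastforce
qed

lemma finite_independent_sets: "finite {T. independent n N T}"
  by (rule finite_subset[of _ "Pow {1..n}"]) (auto simp: independent_def)

lemma independent_empty: "independent n N {}"
  by (simp add: independent_def)

theorem proposition5p5:
  fixes \<zeta> :: "'k::field_char_0" and \<omega> :: "nat \<Rightarrow> nat \<Rightarrow> 'k" and n :: nat
  assumes "alg_closed_type TYPE('k)"
    and "\<zeta> ^ 3 = 1" and "\<zeta> \<noteq> 1"
    and "cube_param n \<omega>"
    and "n \<ge> 1"
  shows "(\<forall>F. F \<in> point_complex n \<omega> \<longleftrightarrow>
             (\<exists>v\<in>{1..n}. independent n (isolation n v (Emat n \<zeta> \<omega>)) F))
       \<and> cdim (point_complex n \<omega>) =
           int (Max {indep_number n (isolation n v (Emat n \<zeta> \<omega>)) | v. v \<in> {1..n}}) - 1"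
proof -
  let ?Ind = "\<lambda>v. {T. independent n (isolation n v (Emat n \<zeta> \<omega>)) T}"
  have faces: "F \<in> point_complex n \<omega> \<longleftrightarrow> (\<exists>v\<in>{1..n}. independent n (isolation n v (Emat n \<zeta> \<omega>)) F)"
    for F
    using point_complex_eq_zero_cycle_sets[OF assms(2-4)]
      zero_cycle_set_iff_independent_isolation[OF skew_matrix_Emat[OF assms(2-4)] assms(5)]
    by simp
  then have \<Delta>: "point_complex n \<omega> = (\<Union>v\<in>{1..n}. ?Ind v)" by blast
  have "{} \<in> point_complex n \<omega>"
    using faces[of "{}"] assms(5) independent_empty by auto
  then have "cdim (point_complex n \<omega>) = int (Max (\<Union>v\<in>{1..n}. card ` ?Ind v)) - 1"
    unfolding \<Delta> by (subst cdim_eq_Max_card) (auto simp: finite_independent_sets image_UN)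
  also have "\<dots> = int (Max ((\<lambda>v. Max (card ` ?Ind v)) ` {1..n})) - 1"
    using assms(5) independent_empty by (subst Max_UN) (auto simp: finite_independent_sets)
  also have "(\<lambda>v. Max (card ` ?Ind v)) ` {1..n}
      = {indep_number n (isolation n v (Emat n \<zeta> \<omega>)) | v. v \<in> {1..n}}"
    unfolding indep_number_def by blast
  finally show ?thesis using faces by blast
qed

end
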